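(* Consider the fixed cost inverse fractional knapsack problem under the $l_1$-norm (defined in the context). If it has an optimal solution, then there exists an optimal solution $(u,v)$ with $v_i=0$ for all $i\in I^1$ and $u_i=0$ for all $i\in I^0$, i.e., profits are only increased for items with $x^*_i=1$ and only reduced for items with $x^*_i=0$.
   Context: Given positive integers $p_i,c_i$ ($i=1,\dots,n$), a budget $b$, and a vector $x^*\in\{0,1\}^n$ with $\sum_{i=1}^n c_i x^*_i=b$. Let $I^1=\{i:x^*_i=1\}$ and $I^0=\{i:x^*_i=0\}$. Given nonnegative integer bounds $\bar u_i,\bar v_i$ and nonnegative weights $w_i$. A feasible modification is $(u,v)$ with $u_i\in[0,\bar u_i]\cap\mathbb Z$, $v_i\in[0,\bar v_i]\cap\mathbb Z$, giving modified profits $\tilde p_i=p_i+u_i-v_i$; costs $c_i$ are not modified. The fixed cost inverse fractional knapsack problem asks for a feasible modification such that $x^*$ is an optimal solution of $\max\{\sum_i\tilde p_i x_i:\sum_i c_ix_i\le b,\ x_i\in[0,1]\}$ and $\sum_{i=1}^n w_i(u_i+v_i)$ is minimal. *)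

theory Defs
  imports "HOL-Analysis.Analysis"
begin

text \<open>Items are indexed by {..<n}. Vectors are functions on nat; only indices below n matter.\<close>

definition frac_feasible :: "nat \<Rightarrow> (nat \<Rightarrow> int) \<Rightarrow> int \<Rightarrow> (nat \<Rightarrow> real) \<Rightarrow> bool" where
  "frac_feasible n c b x \<longleftrightarrow>
     (\<forall>i<n. 0 \<le> x i \<and> x i \<le> 1) \<and> (\<Sum>i<n. real_of_int (c i) * x i) \<le> real_of_int b"

definition frac_knap_optimal :: "nat \<Rightarrow> (nat \<Rightarrow> int) \<Rightarrow> (nat \<Rightarrow> int) \<Rightarrow> int \<Rightarrow> (nat \<Rightarrow> real) \<Rightarrow> bool" where
  "frac_knap_optimal n p c b x \<longleftrightarrow>
     frac_feasible n c b x \<and>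
     (\<forall>y. frac_feasible n c b y \<longrightarrow>
        (\<Sum>i<n. real_of_int (p i) * y i) \<le> (\<Sum>i<n. real_of_int (p i) * x i))"

definition feasible_modification :: "nat \<Rightarrow> (nat \<Rightarrow> int) \<Rightarrow> (nat \<Rightarrow> int) \<Rightarrow> (nat \<Rightarrow> int) \<Rightarrow> (nat \<Rightarrow> int) \<Rightarrow> bool" where
  "feasible_modification n ubar vbar u v \<longleftrightarrow>
     (\<forall>i<n. 0 \<le> u i \<and> u i \<le> ubar i \<and> 0 \<le> v i \<and> v i \<le> vbar i)"

definition inv_admissible ::
  "nat \<Rightarrow> (nat \<Rightarrow> int) \<Rightarrow> (nat \<Rightarrow> int) \<Rightarrow> int \<Rightarrow> (nat \<Rightarrow> int) \<Rightarrow> (nat \<Rightarrow> int) \<Rightarrow> (nat \<Rightarrow> int)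
   \<Rightarrow> (nat \<Rightarrow> int) \<Rightarrow> (nat \<Rightarrow> int) \<Rightarrow> bool" where
  "inv_admissible n p c b xs ubar vbar u v \<longleftrightarrow>
     feasible_modification n ubar vbar u v \<and>
     frac_knap_optimal n (\<lambda>i. p i + u i - v i) c b (\<lambda>i. real_of_int (xs i))"

definition l1_cost :: "nat \<Rightarrow> (nat \<Rightarrow> real) \<Rightarrow> (nat \<Rightarrow> int) \<Rightarrow> (nat \<Rightarrow> int) \<Rightarrow> real" where
  "l1_cost n w u v = (\<Sum>i<n. w i * real_of_int (u i + v i))"

definition inv_optimal ::
  "nat \<Rightarrow> (nat \<Rightarrow> int) \<Rightarrow> (nat \<Rightarrow> int) \<Rightarrow> int \<Rightarrow> (nat \<Rightarrow> int) \<Rightarrow> (nat \<Rightarrow> int) \<Rightarrow> (nat \<Rightarrow> int)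
   \<Rightarrow> (nat \<Rightarrow> real) \<Rightarrow> (nat \<Rightarrow> int) \<Rightarrow> (nat \<Rightarrow> int) \<Rightarrow> bool" where
  "inv_optimal n p c b xs ubar vbar w u v \<longleftrightarrow>
     inv_admissible n p c b xs ubar vbar u v \<and>
     (\<forall>u' v'. inv_admissible n p c b xs ubar vbar u' v' \<longrightarrow> l1_cost n w u v \<le> l1_cost n w u' v')"

end

theory Submission
  imports Defs
begin

text \<open>Given an optimal modification, discard the decreases on items with x*_i = 1 and the
  increases on items with x*_i = 0. Relative to the old modified profits this raises the
  profits of selected items and lowers those of unselected ones, which can only favour the
  0/1 vector x*; and it cannot increase the weighted l1 cost.\<close>

lemma frac_knap_optimal_shift_towards:
  assumes opt: "frac_knap_optimal n p c b x"
    and x_bin: "\<forall>i<n. x i = 0 \<or> x i = 1"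
    and up: "\<forall>i<n. x i = 1 \<longrightarrow> p i \<le> q i"
    and down: "\<forall>i<n. x i = 0 \<longrightarrow> q i \<le> p i"
  shows "frac_knap_optimal n q c b x"
  unfolding frac_knap_optimal_def
proof (intro conjI allI impI)
  show "frac_feasible n c b x"
    using opt unfolding frac_knap_optimal_def by blast
  fix y assume feas_y: "frac_feasible n c b y"
  let ?d = "\<lambda>i. real_of_int (q i - p i)"
  have split: "(\<Sum>i<n. real_of_int (q i) * z i) =
      (\<Sum>i<n. real_of_int (p i) * z i) + (\<Sum>i<n. ?d i * z i)" for z :: "nat \<Rightarrow> real"
    by (simp add: sum.distrib[symmetric] algebra_simps)
  have "(\<Sum>i<n. real_of_int (p i) * y i) \<le> (\<Sum>i<n. real_of_int (p i) * x i)"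
    using opt feas_y unfolding frac_knap_optimal_def by blast
  moreover have "(\<Sum>i<n. ?d i * y i) \<le> (\<Sum>i<n. ?d i * x i)"
  proof (rule sum_mono)
    fix i assume "i \<in> {..<n}"
    then have i: "i < n" by simp
    have "0 \<le> y i" "y i \<le> 1"
      using feas_y i unfolding frac_feasible_def by auto
    then show "?d i * y i \<le> ?d i * x i"
      using x_bin up down i by (auto simp: mult_left_le mult_nonpos_nonneg)
  qed
  ultimately show "(\<Sum>i<n. real_of_int (q i) * y i) \<le> (\<Sum>i<n. real_of_int (q i) * x i)"
    using split[of y] split[of x] by linarith
qed

lemma l1_cost_mono:
  assumes "\<forall>i<n. w i \<ge> 0"
    and "\<forall>i<n. u' i + v' i \<le> u i + v i"
  shows "l1_cost n w u' v' \<le> l1_cost n w u v"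
  unfolding l1_cost_def
proof (rule sum_mono)
  fix i assume "i \<in> {..<n}"
  then show "w i * real_of_int (u' i + v' i) \<le> w i * real_of_int (u i + v i)"
    using assms by (intro mult_left_mono) auto
qed

lemma inv_optimal_if_admissible_cost_le:
  assumes "inv_optimal n p c b xs ubar vbar w u v"
    and "inv_admissible n p c b xs ubar vbar u' v'"
    and "l1_cost n w u' v' \<le> l1_cost n w u v"
  shows "inv_optimal n p c b xs ubar vbar w u' v'"
  using assms unfolding inv_optimal_def by (meson order_trans)

lemma inv_admissible_drop_wrong_signs:
  assumes adm: "inv_admissible n p c b xs ubar vbar u v"
    and xs_bin: "\<forall>i<n. xs i = 0 \<or> xs i = 1"
    and ubar_nn: "\<forall>i<n. ubar i \<ge> 0"
    and vbar_nn: "\<forall>i<n. vbar i \<ge> 0"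
  shows "inv_admissible n p c b xs ubar vbar
           (\<lambda>i. if xs i = 1 then u i else 0) (\<lambda>i. if xs i = 1 then 0 else v i)"
    (is "inv_admissible _ _ _ _ _ _ _ ?u ?v")
proof -
  have feas: "feasible_modification n ubar vbar u v"
    and opt: "frac_knap_optimal n (\<lambda>i. p i + u i - v i) c b (\<lambda>i. real_of_int (xs i))"
    using adm unfolding inv_admissible_def by auto
  have "feasible_modification n ubar vbar ?u ?v"
    using feas ubar_nn vbar_nn unfolding feasible_modification_def by auto
  moreover have "frac_knap_optimal n (\<lambda>i. p i + ?u i - ?v i) c b (\<lambda>i. real_of_int (xs i))"
    using opt
  proof (rule frac_knap_optimal_shift_towards)
    show "\<forall>i<n. real_of_int (xs i) = 0 \<or> real_of_int (xs i) = 1"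
      using xs_bin by auto
    show "\<forall>i<n. real_of_int (xs i) = 1 \<longrightarrow> p i + u i - v i \<le> p i + ?u i - ?v i"
      using feas unfolding feasible_modification_def by auto
    show "\<forall>i<n. real_of_int (xs i) = 0 \<longrightarrow> p i + ?u i - ?v i \<le> p i + u i - v i"
      using feas unfolding feasible_modification_def by auto
  qed
  ultimately show ?thesis
    unfolding inv_admissible_def by blast
qed

theorem mainTheorem2:
  fixes n :: nat and p c ubar vbar xs :: "nat \<Rightarrow> int" and b :: int and w :: "nat \<Rightarrow> real"
  assumes p_pos: "\<forall>i<n. p i > 0"
    and c_pos: "\<forall>i<n. c i > 0"
    and xs_bin: "\<forall>i<n. xs i = 0 \<or> xs i = 1"
    and xs_budget: "(\<Sum>i<n. c i * xs i) = b"
    and ubar_nn: "\<forall>i<n. ubar i \<ge> 0"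
    and vbar_nn: "\<forall>i<n. vbar i \<ge> 0"
    and w_nn: "\<forall>i<n. w i \<ge> 0"
    and ex_opt: "\<exists>u v. inv_optimal n p c b xs ubar vbar w u v"
  shows "\<exists>u v. inv_optimal n p c b xs ubar vbar w u v \<and>
           (\<forall>i<n. xs i = 1 \<longrightarrow> v i = 0) \<and> (\<forall>i<n. xs i = 0 \<longrightarrow> u i = 0)"
proof -
  obtain u v where opt: "inv_optimal n p c b xs ubar vbar w u v"
    using ex_opt by blast
  define u' where "u' = (\<lambda>i. if xs i = 1 then u i else 0)"
  define v' where "v' = (\<lambda>i. if xs i = 1 then 0 else v i)"
  have adm: "inv_admissible n p c b xs ubar vbar u v"
    using opt unfolding inv_optimal_def by blast
  have adm': "inv_admissible n p c b xs ubar vbar u' v'"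
    unfolding u'_def v'_def
    using adm xs_bin ubar_nn vbar_nn by (rule inv_admissible_drop_wrong_signs)
  have "l1_cost n w u' v' \<le> l1_cost n w u v"
    using w_nn adm
    by (intro l1_cost_mono)
       (auto simp: u'_def v'_def inv_admissible_def feasible_modification_def)
  then have "inv_optimal n p c b xs ubar vbar w u' v'"
    using opt adm' by (rule inv_optimal_if_admissible_cost_le[rotated 2])
  moreover have "(\<forall>i<n. xs i = 1 \<longrightarrow> v' i = 0) \<and> (\<forall>i<n. xs i = 0 \<longrightarrow> u' i = 0)"
    unfolding u'_def v'_def by auto
  ultimately show ?thesis by blast
qed

end
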